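(* Let $q$ be a prime power, $n\geq 1$, and $c\in\mathbb{F}_q\setminus\{1\}$. Let $f_1,\ldots,f_n:\mathbb{F}_q\to\mathbb{F}_q$ be functions with $c$-differential uniformities $\delta_1,\ldots,\delta_n$ respectively. Let $\{\beta_1,\ldots,\beta_n\}$ be a basis of $\mathbb{F}_{q^n}$ over $\mathbb{F}_q$, let $A$ be the $n\times n$ matrix with $(i,j)$ entry $\beta_i^{q^{j-1}}$, write $A^{-1}=(a_{i,j})_{i,j}$, and for $1\leq k\leq n$ let $L_k(x)=\sum_{i=1}^n a_{i,k}x^{q^{i-1}}$. Then $F:\mathbb{F}_{q^n}\to\mathbb{F}_{q^n}$, $F(x)=\sum_{k=1}^n\beta_k f_k(L_k(x))$, has $c$-differential uniformity equal to $\prod_{i=1}^n\delta_i$.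
   Context: For a finite field $K$, a function $h:K\to K$ and $c\in K$, let ${}_c\Delta_h(a,b)=\#\{x\in K: h(x+a)-ch(x)=b\}$ and the $c$-differential uniformity is $\delta_{h,c}=\max\{{}_c\Delta_h(a,b): a,b\in K,\ a\neq 0\text{ if } c=1\}$. The matrix $A$ is nonsingular, and $L_k(\sum_i\beta_ix_i)=x_k$ for $x_i\in\mathbb{F}_q$. *)

theory Defs
  imports Main
begin

definition is_subfield :: "'a::field set \<Rightarrow> bool" where
  "is_subfield K \<longleftrightarrow> 0 \<in> K \<and> 1 \<in> K \<and>
     (\<forall>x\<in>K. \<forall>y\<in>K. x + y \<in> K \<and> x - y \<in> K \<and> x * y \<in> K) \<and>
     (\<forall>x\<in>K. inverse x \<in> K)"

definition is_basis_over :: "'a::field set \<Rightarrow> nat \<Rightarrow> (nat \<Rightarrow> 'a) \<Rightarrow> bool" where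
  "is_basis_over K n beta \<longleftrightarrow>
     (\<forall>x. \<exists>!v. (\<forall>i<n. v i \<in> K) \<and> (\<forall>i. n \<le> i \<longrightarrow> v i = 0) \<and>
                x = (\<Sum>i<n. v i * beta i))"

definition cDelta :: "'a::field set \<Rightarrow> ('a \<Rightarrow> 'a) \<Rightarrow> 'a \<Rightarrow> 'a \<Rightarrow> 'a \<Rightarrow> nat" where
  "cDelta K h c a b = card {x \<in> K. h (x + a) - c * h x = b}"

definition c_diff_unif :: "'a::field set \<Rightarrow> ('a \<Rightarrow> 'a) \<Rightarrow> 'a \<Rightarrow> nat" where
  "c_diff_unif K h c =
     Max ((\<lambda>(a, b). cDelta K h c a b) ` {(a, b). a \<in> K \<and> b \<in> K \<and> (c = 1 \<longrightarrow> a \<noteq> 0)})"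

end

theory Submission
  imports Defs "HOL-Computational_Algebra.Primes" "HOL-Number_Theory.Cong" "HOL-Library.FuncSet"
begin

(* Write x = x_1 beta_1 + ... + x_n beta_n with x_k in K. Since card K is a power of the
   characteristic p (a finite additive group of characteristic p grows by a factor p each time
   an element is adjoined), x \<mapsto> x^(q^i) is additive and fixes K, so the relation
   A A^-1 = I shows that L_k(x) = x_k. Hence F(x) = beta_1 f_1(x_1) + ... + beta_n f_n(x_n), the
   equation F(x + a) - c F(x) = b splits into the n independent equations
   f_k(x_k + a_k) - c f_k(x_k) = b_k over K, its number of solutions is the product of theirs,
   and the maximum over (a, b) is attained by maximising each factor separately. *)

definition add_subgroup :: "'a::ab_group_add set \<Rightarrow> bool" where
  "add_subgroup H \<longleftrightarrow> 0 \<in> H \<and> (\<forall>x\<in>H. \<forall>y\<in>H. x - y \<in> H)"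

lemma add_subgroup_diff: "add_subgroup H \<Longrightarrow> x \<in> H \<Longrightarrow> y \<in> H \<Longrightarrow> x - y \<in> H"
  by (simp add: add_subgroup_def)

lemma add_subgroup_add: "add_subgroup H \<Longrightarrow> x \<in> H \<Longrightarrow> y \<in> H \<Longrightarrow> x + y \<in> H"
  by (metis add_subgroup_def diff_0 diff_minus_eq_add)

lemma add_subgroup_of_nat_mult:
  fixes H :: "'a::ring_1 set"
  assumes "add_subgroup H" "y \<in> H"
  shows "of_nat k * y \<in> H"
  using assms by (induction k) (auto simp: add_subgroup_def distrib_right add_subgroup_add)

lemma is_subfield_add_subgroup: "is_subfield K \<Longrightarrow> add_subgroup K"
  by (simp add: is_subfield_def add_subgroup_def)

lemma of_nat_mod_CHAR: "(of_nat (k mod CHAR('a)) :: 'a::semiring_1_cancel) = of_nat k"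
  by (simp add: of_nat_eq_iff_cong_CHAR cong_def)

lemma of_nat_CHAR_minus: "j \<le> CHAR('a) \<Longrightarrow> (of_nat (CHAR('a) - j) :: 'a::ring_1) = - of_nat j"
  by (simp add: of_nat_diff)

definition adjoin :: "'a::field set \<Rightarrow> 'a \<Rightarrow> 'a set" where
  "adjoin H x = (\<lambda>(h, i). h + of_nat i * x) ` (H \<times> {..<CHAR('a)})"

lemma subset_adjoin: "0 < CHAR('a) \<Longrightarrow> H \<subseteq> adjoin H (x::'a::field)"
  unfolding adjoin_def by (force intro: image_eqI[where x = "(_, 0)"])

lemma adjoin_subset:
  "add_subgroup G \<Longrightarrow> H \<subseteq> G \<Longrightarrow> x \<in> G \<Longrightarrow> adjoin H x \<subseteq> G"
  unfolding adjoin_def by (auto intro!: add_subgroup_add add_subgroup_of_nat_mult)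

lemma add_subgroup_adjoin:
  fixes H :: "'a::field set"
  assumes "0 < CHAR('a)" "add_subgroup H"
  shows "add_subgroup (adjoin H x)"
  unfolding add_subgroup_def
proof (intro conjI ballI)
  show "0 \<in> adjoin H x"
    using assms subset_adjoin add_subgroup_def by blast
  fix y z assume "y \<in> adjoin H x" "z \<in> adjoin H x"
  then obtain h i h' j where hi: "h \<in> H" "h' \<in> H" "j < CHAR('a)"
    and yz: "y = h + of_nat i * x" "z = h' + of_nat j * x"
    unfolding adjoin_def by auto
  have "y - z = (h - h') + of_nat ((i + (CHAR('a) - j)) mod CHAR('a)) * x"
    using hi yz by (simp add: of_nat_mod_CHAR of_nat_CHAR_minus algebra_simps)
  moreover have "h - h' \<in> H"
    using assms hi add_subgroup_diff by blast
  ultimately show "y - z \<in> adjoin H x"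
    unfolding adjoin_def using assms(1) by (auto intro!: image_eqI[where x = "(h - h', _)"])
qed

lemma card_adjoin:
  fixes H :: "'a::field set"
  assumes p: "0 < CHAR('a)" and H: "add_subgroup H" and x: "x \<notin> H"
  shows "card (adjoin H x) = card H * CHAR('a)"
proof -
  have "inj_on (\<lambda>(h, i). h + of_nat i * x) (H \<times> {..<CHAR('a)})"
  proof (rule inj_onI, clarsimp)
    have key: "i = j" if hi: "h \<in> H" "h' \<in> H" "j < i" "i < CHAR('a)"
      and eq: "h + of_nat i * x = h' + of_nat j * x" for h h' i j
    proof -
      have "of_nat (i - j) * x = h' - h"
        using eq \<open>j < i\<close> by (simp add: of_nat_diff algebra_simps)
      then have in_H: "of_nat (i - j) * x \<in> H"
        using H hi add_subgroup_diff by metis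
      have "\<not> CHAR('a) dvd (i - j)"
        using hi by (auto dest: dvd_imp_le)
      then have "coprime (i - j) CHAR('a)"
        using p prime_CHAR_semidom[where 'a='a] by (metis prime_imp_coprime coprime_commute)
      then obtain u where "[(i - j) * u = 1] (mod CHAR('a))"
        using cong_solve_coprime_nat by auto
      then have "of_nat u * of_nat (i - j) = (1 :: 'a)"
        by (metis of_nat_eq_iff_cong_CHAR of_nat_1 of_nat_mult mult.commute)
      then have "of_nat u * (of_nat (i - j) * x) = x"
        by (simp flip: mult.assoc)
      then show ?thesis
        using add_subgroup_of_nat_mult[OF H in_H] x by metis
    qed
    fix h h' i j assume "h \<in> H" "h' \<in> H" "i < CHAR('a)" "j < CHAR('a)"
      "h + of_nat i * x = h' + of_nat j * x"
    then show "h = h' \<and> i = j"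
      using key[of h h' j i] key[of h' h i j] by (cases i j rule: linorder_cases) auto
  qed
  then show ?thesis
    unfolding adjoin_def by (simp add: card_image card_cartesian_product)
qed

lemma card_add_subgroup_eq_mult_CHAR_power:
  fixes G H :: "'a::field set"
  assumes "0 < CHAR('a)" "finite G" "add_subgroup G" "add_subgroup H" "H \<subseteq> G"
  shows "\<exists>e. card G = card H * CHAR('a) ^ e"
  using assms(4,5)
proof (induction "card G - card H" arbitrary: H rule: less_induct)
  case less
  show ?case
  proof (cases "H = G")
    case True
    then show ?thesis by (metis power_0 mult_1_right)
  next
    case False
    then obtain x where x: "x \<in> G" "x \<notin> H"
      using less.prems by blast
    have sub: "adjoin H x \<subseteq> G"
      using adjoin_subset assms(3) less.prems x by blast
    have card: "card (adjoin H x) = card H * CHAR('a)"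
      using card_adjoin assms(1) less.prems x by blast
    have "card H > 0"
      using less.prems assms(2) add_subgroup_def by (auto simp: card_gt_0_iff dest: finite_subset)
    moreover have "CHAR('a) > 1"
      using assms(1) prime_CHAR_semidom[where 'a='a] prime_gt_1_nat by blast
    ultimately have "card H < card (adjoin H x)"
      using card by simp
    moreover have "card (adjoin H x) \<le> card G"
      using sub assms(2) by (simp add: card_mono)
    ultimately have "card G - card (adjoin H x) < card G - card H"
      by linarith
    then obtain e where "card G = card (adjoin H x) * CHAR('a) ^ e"
      using less.hyps add_subgroup_adjoin[OF assms(1) less.prems(1)] sub by blast
    then have "card G = card H * CHAR('a) ^ Suc e"
      using card by simp
    then show ?thesis ..
  qed
qed

lemma card_add_subgroup_CHAR_power:
  fixes G :: "'a::field set"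
  assumes "0 < CHAR('a)" "finite G" "add_subgroup G"
  shows "\<exists>e. card G = CHAR('a) ^ e"
proof -
  have "add_subgroup {0::'a}" "{0} \<subseteq> G"
    using assms(3) by (auto simp: add_subgroup_def)
  then obtain e where "card G = card {0::'a} * CHAR('a) ^ e"
    using card_add_subgroup_eq_mult_CHAR_power[OF assms] by blast
  then show ?thesis
    by auto
qed

lemma is_subfield_power_card:
  fixes K :: "'a::field set"
  assumes K: "is_subfield K" "finite K" and x: "x \<in> K"
  shows "x ^ card K = x"
proof (cases "x = 0")
  case True
  have "card K \<noteq> 0"
    using K by (auto simp: is_subfield_def)
  then show ?thesis
    using True by simp
next
  case False
  have closed: "u * v \<in> K" "inverse u \<in> K" if "u \<in> K" "v \<in> K" for u v
    using K that unfolding is_subfield_def by auto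
  have "x ^ card (K - {0}) * \<Prod>(K - {0}) = (\<Prod>y\<in>K - {0}. x * y)"
    by (simp add: prod.distrib)
  also have "\<dots> = \<Prod>(K - {0})"
    by (rule prod.reindex_bij_witness[of _ "\<lambda>y. y / x" "\<lambda>y. x * y"])
       (use False x closed in \<open>auto simp: divide_inverse\<close>)
  finally have "x ^ card (K - {0}) = 1"
    using K(2) by simp
  moreover have "card K = Suc (card (K - {0}))"
    using K unfolding is_subfield_def by (metis card_Suc_Diff1)
  ultimately show ?thesis
    by simp
qed

lemma is_subfield_power_card_power:
  fixes K :: "'a::field set"
  assumes "is_subfield K" "finite K" "x \<in> K"
  shows "x ^ (card K ^ i) = x"
proof (induction i)
  case (Suc i)
  then show ?case
    using is_subfield_power_card[OF assms] by (simp add: power_mult)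
qed simp

locale subfield_basis =
  fixes K :: "'a::field set" and n :: nat and beta :: "nat \<Rightarrow> 'a"
  assumes subfield: "is_subfield K"
    and basis: "is_basis_over K n beta"
begin

definition is_coord :: "'a \<Rightarrow> (nat \<Rightarrow> 'a) \<Rightarrow> bool" where
  "is_coord x v \<longleftrightarrow> (\<forall>i<n. v i \<in> K) \<and> (\<forall>i. n \<le> i \<longrightarrow> v i = 0) \<and> x = (\<Sum>i<n. v i * beta i)"

definition coord :: "'a \<Rightarrow> nat \<Rightarrow> 'a" where
  "coord x = (THE v. is_coord x v)"

lemma ex1_is_coord: "\<exists>!v. is_coord x v"
  using basis by (simp add: is_basis_over_def is_coord_def)

lemma is_coord_coord: "is_coord x (coord x)"
  unfolding coord_def using ex1_is_coord by (rule theI')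

lemma coord_in: "i < n \<Longrightarrow> coord x i \<in> K"
  using is_coord_coord by (simp add: is_coord_def)

lemma coord_expansion: "(\<Sum>i<n. coord x i * beta i) = x"
  using is_coord_coord[of x] by (simp add: is_coord_def)

lemma coord_sum:
  assumes "\<And>i. i < n \<Longrightarrow> v i \<in> K" "i < n"
  shows "coord (\<Sum>i<n. v i * beta i) i = v i"
proof -
  have "is_coord (\<Sum>i<n. v i * beta i) (\<lambda>i. if i < n then v i else 0)"
    using assms(1) by (simp add: is_coord_def)
  then have "coord (\<Sum>i<n. v i * beta i) = (\<lambda>i. if i < n then v i else 0)"
    unfolding coord_def by (rule the1_equality[OF ex1_is_coord])
  then show ?thesis
    using assms(2) by simp
qed

lemma coord_add:
  assumes "i < n"
  shows "coord (x + y) i = coord x i + coord y i"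
proof -
  have "x + y = (\<Sum>i<n. (coord x i + coord y i) * beta i)"
    by (simp add: distrib_right sum.distrib coord_expansion)
  moreover have "coord x i + coord y i \<in> K" if "i < n" for i
    using subfield coord_in that by (simp add: is_subfield_def)
  ultimately show ?thesis
    using coord_sum[of "\<lambda>i. coord x i + coord y i" i] assms by simp
qed

lemma card_coord_preimage:
  assumes "\<And>k. k < n \<Longrightarrow> T k \<subseteq> K"
  shows "card {x. \<forall>k<n. coord x k \<in> T k} = (\<Prod>k<n. card (T k))"
proof -
  have "bij_betw (\<lambda>x. restrict (coord x) {..<n}) {x. \<forall>k<n. coord x k \<in> T k} (PiE {..<n} T)"
  proof (rule bij_betw_byWitness[where f' = "\<lambda>v. \<Sum>k<n. v k * beta k"])
    show "\<forall>x\<in>{x. \<forall>k<n. coord x k \<in> T k}. (\<Sum>k<n. restrict (coord x) {..<n} k * beta k) = x"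
      by (simp add: coord_expansion)
    show "\<forall>v\<in>PiE {..<n} T. restrict (coord (\<Sum>k<n. v k * beta k)) {..<n} = v"
    proof
      fix v assume v: "v \<in> PiE {..<n} T"
      then have "\<And>k. k < n \<Longrightarrow> v k \<in> K"
        using assms by blast
      with v show "restrict (coord (\<Sum>k<n. v k * beta k)) {..<n} = v"
        by (intro extensionalityI[where A = "{..<n}"]) (auto simp: coord_sum PiE_iff)
    qed
    show "(\<lambda>x. restrict (coord x) {..<n}) ` {x. \<forall>k<n. coord x k \<in> T k} \<subseteq> PiE {..<n} T"
      by (rule image_subsetI) (simp add: restrict_PiE_iff)
    show "(\<lambda>v. \<Sum>k<n. v k * beta k) ` PiE {..<n} T \<subseteq> {x. \<forall>k<n. coord x k \<in> T k}"
    proof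
      fix x assume "x \<in> (\<lambda>v. \<Sum>k<n. v k * beta k) ` PiE {..<n} T"
      then obtain v where v: "v \<in> PiE {..<n} T" and x: "x = (\<Sum>k<n. v k * beta k)"
        by blast
      have "\<And>k. k < n \<Longrightarrow> v k \<in> K"
        using v assms by blast
      then show "x \<in> {x. \<forall>k<n. coord x k \<in> T k}"
        using v x by (simp add: coord_sum PiE_mem)
    qed
  qed
  then show ?thesis
    by (simp add: bij_betw_same_card card_PiE)
qed

definition coordwise :: "(nat \<Rightarrow> 'a \<Rightarrow> 'a) \<Rightarrow> 'a \<Rightarrow> 'a" where
  "coordwise f x = (\<Sum>k<n. beta k * f k (coord x k))"

lemma coordwise_c_diff_eq_iff:
  assumes c: "c \<in> K" and f: "\<And>k y. k < n \<Longrightarrow> y \<in> K \<Longrightarrow> f k y \<in> K"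
  shows "coordwise f (x + a) - c * coordwise f x = b \<longleftrightarrow>
         (\<forall>k<n. f k (coord x k + coord a k) - c * f k (coord x k) = coord b k)"
proof -
  define d where "d k = f k (coord x k + coord a k) - c * f k (coord x k)" for k
  have d_in: "d k \<in> K" if "k < n" for k
    using subfield c f coord_in that by (simp add: d_def is_subfield_def)
  have "coordwise f (x + a) = (\<Sum>k<n. beta k * f k (coord x k + coord a k))"
    unfolding coordwise_def by (rule sum.cong) (simp_all add: coord_add)
  then have diff: "coordwise f (x + a) - c * coordwise f x = (\<Sum>k<n. d k * beta k)"
    by (simp add: coordwise_def d_def sum_subtractf sum_distrib_left algebra_simps)
  have "coordwise f (x + a) - c * coordwise f x = b \<longleftrightarrow> (\<forall>k<n. d k = coord b k)"
  proof
    assume "coordwise f (x + a) - c * coordwise f x = b"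
    then show "\<forall>k<n. d k = coord b k"
      using diff coord_sum[of d] d_in by auto
  next
    assume "\<forall>k<n. d k = coord b k"
    then show "coordwise f (x + a) - c * coordwise f x = b"
      using diff coord_expansion[of b] by simp
  qed
  then show ?thesis
    by (simp add: d_def)
qed

lemma cDelta_coordwise:
  assumes "c \<in> K" and "\<And>k y. k < n \<Longrightarrow> y \<in> K \<Longrightarrow> f k y \<in> K"
  shows "cDelta UNIV (coordwise f) c a b = (\<Prod>k<n. cDelta K (f k) c (coord a k) (coord b k))"
proof -
  have "{x \<in> UNIV. coordwise f (x + a) - c * coordwise f x = b}
      = {x. \<forall>k<n. coord x k \<in> {y \<in> K. f k (y + coord a k) - c * f k y = coord b k}}"
    using coordwise_c_diff_eq_iff[OF assms] coord_in by auto
  then show ?thesis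
    unfolding cDelta_def by (simp only:) (rule card_coord_preimage, blast)
qed

end

lemma c_diff_unif_eq_Max:
  "c \<noteq> 1 \<Longrightarrow> c_diff_unif K h c = Max ((\<lambda>(a, b). cDelta K h c a b) ` (K \<times> K))"
  unfolding c_diff_unif_def by (rule arg_cong[where f = Max]) auto

locale finite_subfield_basis = subfield_basis K n beta
  for K :: "'a::{field, finite} set" and n beta
begin

lemma Max_prod_coord:
  fixes g :: "nat \<Rightarrow> 'a \<Rightarrow> 'a \<Rightarrow> nat"
  shows "Max ((\<lambda>(a, b). \<Prod>k<n. g k (coord a k) (coord b k)) ` UNIV)
       = (\<Prod>k<n. Max ((\<lambda>(u, v). g k u v) ` (K \<times> K)))"
proof (rule Max_eqI)
  have "K \<noteq> {}"
    using subfield by (auto simp: is_subfield_def)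
  then have "Max ((\<lambda>(u, v). g k u v) ` (K \<times> K)) \<in> (\<lambda>(u, v). g k u v) ` (K \<times> K)" for k
    by (intro Max_in) auto
  then have "\<forall>k. \<exists>uv. uv \<in> K \<times> K \<and> Max ((\<lambda>(u, v). g k u v) ` (K \<times> K)) = (\<lambda>(u, v). g k u v) uv"
    by blast
  then obtain uv where uv: "\<And>k. uv k \<in> K \<times> K"
    "\<And>k. Max ((\<lambda>(u, v). g k u v) ` (K \<times> K)) = g k (fst (uv k)) (snd (uv k))"
    unfolding case_prod_beta by metis
  let ?a = "\<Sum>k<n. fst (uv k) * beta k" and ?b = "\<Sum>k<n. snd (uv k) * beta k"
  have attained: "(\<Prod>k<n. Max ((\<lambda>(u, v). g k u v) ` (K \<times> K))) = (\<Prod>k<n. g k (coord ?a k) (coord ?b k))"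
    using uv by (intro prod.cong) (auto simp: coord_sum mem_Times_iff)
  show "(\<Prod>k<n. Max ((\<lambda>(u, v). g k u v) ` (K \<times> K)))
      \<in> (\<lambda>(a, b). \<Prod>k<n. g k (coord a k) (coord b k)) ` UNIV"
    by (rule image_eqI[where x = "(?a, ?b)"]) (simp_all add: attained)
next
  fix y assume "y \<in> (\<lambda>(a, b). \<Prod>k<n. g k (coord a k) (coord b k)) ` UNIV"
  then obtain a b where y: "y = (\<Prod>k<n. g k (coord a k) (coord b k))"
    by auto
  show "y \<le> (\<Prod>k<n. Max ((\<lambda>(u, v). g k u v) ` (K \<times> K)))"
    unfolding y by (rule prod_mono) (auto intro!: Max_ge simp: coord_in)
qed simp

lemma c_diff_unif_coordwise:
  assumes c: "c \<in> K" "c \<noteq> 1" and f_in: "\<And>k y. k < n \<Longrightarrow> y \<in> K \<Longrightarrow> f k y \<in> K"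
  shows "c_diff_unif UNIV (coordwise f) c = (\<Prod>k<n. c_diff_unif K (f k) c)"
proof -
  have "c_diff_unif UNIV (coordwise f) c
      = Max ((\<lambda>(a, b). \<Prod>k<n. cDelta K (f k) c (coord a k) (coord b k)) ` UNIV)"
  proof -
    have "cDelta UNIV (coordwise f) c = (\<lambda>a b. \<Prod>k<n. cDelta K (f k) c (coord a k) (coord b k))"
      using cDelta_coordwise[of c f, OF c(1) f_in] by blast
    then show ?thesis
      by (simp only: c_diff_unif_eq_Max[OF c(2)] UNIV_Times_UNIV)
  qed
  also have "\<dots> = (\<Prod>k<n. Max ((\<lambda>(u, v). cDelta K (f k) c u v) ` (K \<times> K)))"
    by (rule Max_prod_coord)
  also have "\<dots> = (\<Prod>k<n. c_diff_unif K (f k) c)"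
    by (simp only: c_diff_unif_eq_Max[OF c(2)])
  finally show ?thesis .
qed

lemma power_card_power_expansion:
  "x ^ (card K ^ i) = (\<Sum>j<n. coord x j * beta j ^ (card K ^ i))"
proof -
  have char: "0 < CHAR('a)"
    by (rule finite_imp_CHAR_pos[OF finite_UNIV])
  obtain e where e: "card K = CHAR('a) ^ e"
    using card_add_subgroup_CHAR_power[OF char finite is_subfield_add_subgroup[OF subfield]] by blast
  have "x ^ (card K ^ i) = (\<Sum>j<n. coord x j * beta j) ^ (card K ^ i)"
    by (simp add: coord_expansion)
  also have "\<dots> = (\<Sum>j<n. (coord x j * beta j) ^ (card K ^ i))"
    by (rule freshmans_dream_sum'[where n = "e * i"])
       (simp_all add: char prime_CHAR_semidom e power_mult)
  also have "\<dots> = (\<Sum>j<n. coord x j * beta j ^ (card K ^ i))"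
    by (rule sum.cong) (simp_all add: power_mult_distrib is_subfield_power_card_power subfield coord_in)
  finally show ?thesis .
qed

lemma coord_linearized:
  assumes inv: "\<And>i j. i < n \<Longrightarrow> j < n \<Longrightarrow>
      (\<Sum>l<n. beta i ^ (card K ^ l) * a l j) = (if i = j then 1 else 0)"
    and k: "k < n"
  shows "(\<Sum>i<n. a i k * x ^ (card K ^ i)) = coord x k"
proof -
  have "(\<Sum>i<n. a i k * x ^ (card K ^ i)) = (\<Sum>i<n. \<Sum>j<n. coord x j * (beta j ^ (card K ^ i) * a i k))"
    by (simp add: power_card_power_expansion[of x] sum_distrib_left mult_ac)
  also have "\<dots> = (\<Sum>j<n. coord x j * (\<Sum>i<n. beta j ^ (card K ^ i) * a i k))"
    by (subst sum.swap) (simp add: sum_distrib_left)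
  also have "\<dots> = (\<Sum>j<n. if j = k then coord x j else 0)"
    by (rule sum.cong) (simp_all add: inv k)
  also have "\<dots> = coord x k"
    using k by simp
  finally show ?thesis .
qed

end

theorem theorem3p1:
  fixes K :: "'a::{field,finite} set"
    and q n :: nat
    and c :: 'a
    and f :: "nat \<Rightarrow> 'a \<Rightarrow> 'a"
    and beta :: "nat \<Rightarrow> 'a"
    and a :: "nat \<Rightarrow> nat \<Rightarrow> 'a"
  assumes K: "is_subfield K"
    and q: "card K = q"
    and n: "n \<ge> 1"
    and cK: "c \<in> K" and c1: "c \<noteq> 1"
    and fK: "\<And>k x. k < n \<Longrightarrow> x \<in> K \<Longrightarrow> f k x \<in> K"
    and basis: "is_basis_over K n beta"
    and inv_right: "\<And>i j. i < n \<Longrightarrow> j < n \<Longrightarrow>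
        (\<Sum>l<n. beta i ^ (q ^ l) * a l j) = (if i = j then 1 else 0)"
    and inv_left: "\<And>i j. i < n \<Longrightarrow> j < n \<Longrightarrow>
        (\<Sum>l<n. a i l * beta l ^ (q ^ j)) = (if i = j then 1 else 0)"
  shows "c_diff_unif (UNIV :: 'a set)
           (\<lambda>x. \<Sum>k<n. beta k * f k (\<Sum>i<n. a i k * x ^ (q ^ i))) c
         = (\<Prod>k<n. c_diff_unif K (f k) c)"
proof -
  interpret finite_subfield_basis K n beta
    using K basis by unfold_locales
  have "(\<Sum>i<n. a i k * x ^ (q ^ i)) = coord x k" if "k < n" for x k
    using coord_linearized[of a] inv_right that unfolding q by blast
  then have "(\<lambda>x. \<Sum>k<n. beta k * f k (\<Sum>i<n. a i k * x ^ (q ^ i))) = coordwise f"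
    unfolding coordwise_def by (intro ext sum.cong) simp_all
  then show ?thesis
    using c_diff_unif_coordwise[OF cK c1 fK] by simp
qed

end
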